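(* Let $\mathcal{B}$ be an algebra in a functional language $\mathcal{L}$ and let $\Lambda^{\mathcal{B}}$ be the direct system of formulas associated with $\mathcal{B}$ (described in the context). Then $L(\Lambda^{\mathcal{B}})\cong\mathcal{B}$.
   Context: Functional language: operation symbols $F$ (arity $n_F$) and constants only. A diagram-formula in a finite reduct $\mathcal{L}'$ in finite variables $X$ is a conjunction of atomic formulas and negations such that $\neg(x=y)$ is a conjunct for distinct $x,y\in X$, for each $F\in\mathcal{L}'$ and $(x_0,\dots,x_{n_F})\in X^{n_F+1}$ exactly one of $F(x_1,\dots,x_{n_F})=x_0$ and its negation is a conjunct, and for each constant $c\in\mathcal{L}'$ and $x\in X$ exactly one of $x=c$, $\neg(x=c)$ is a conjunct. A direct system of formulas $\Lambda=(I,\varphi_i,\gamma_{ij})$: $(I,\le)$ directed; $\varphi_i$ consistent diagram-formulas in finite reducts $\mathcal{L}_i$ and finite variables $X_i$; maps $\gamma_{ij}:X_i\to X_j$ ($i\le j$) with $\gamma_{ii}=\mathrm{id}$, $\gamma_{jk}\gamma_{ij}=\gamma_{ik}$, conjuncts of $\varphi_i(\gamma_{ij}(X_i))$ are conjuncts of $\varphi_j$; every constant appears in a conjunct $x=c$ of some $\varphi_i$; for all $F,i,(x_1,\dots,x_{n_F})\in X_i^{n_F}$ some $j\ge i$ has a conjunct $F(\gamma_{ij}(x_1),\dots)=x_j$. Its limit algebra $L(\Lambda)$ has universe $\{(x,i):x\in X_i\}/\!\equiv$, $(x,i)\equiv(y,j)$ iff $\gamma_{ik}(x)=\gamma_{jk}(y)$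 for some $k\ge i,j$, with constants/operations read off from the conjuncts $x=c$ and $F(\dots)=x_j$. The system $\Lambda^{\mathcal{B}}$: take variables $X=\{x_b:b\in B\}$; $I$ is the set of pairs $(\mathcal{L}',X')$ with $\mathcal{L}'$ a finite reduct of $\mathcal{L}$ and $X'$ a finite subset of $X$, ordered by $(\mathcal{L}',X')\le(\mathcal{L}'',X'')$ iff $\mathcal{L}'\subseteq\mathcal{L}''$ and $X'\subseteq X''$; $\varphi_{(\mathcal{L}',X')}$ is the diagram-formula in $\mathcal{L}'$ and $X'$ consisting of exactly those conjuncts (among $x_b\ne x_{b'}$, $x_b=c$ or its negation, $F(x_{b_1},\dots,x_{b_{n_F}})=x_{b_0}$ or its negation, for $c,F\in\mathcal{L}'$ and variables in $X'$) that are true in $\mathcal{B}$ under $x_b\mapsto b$; all maps $\gamma$ are inclusions $x_b\mapsto x_b$. This is a direct system of formulas. *)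

theory Defs
  imports Main
begin

definition is_algebra ::
  "('f \<Rightarrow> nat) \<Rightarrow> 'a set \<Rightarrow> ('f \<Rightarrow> 'a list \<Rightarrow> 'a) \<Rightarrow> ('c \<Rightarrow> 'a) \<Rightarrow> bool" where
  "is_algebra ar A opA cA \<longleftrightarrow> A \<noteq> {} \<and>
     (\<forall>F xs. length xs = ar F \<and> set xs \<subseteq> A \<longrightarrow> opA F xs \<in> A) \<and>
     (\<forall>c. cA c \<in> A)"

definition alg_iso ::
  "('f \<Rightarrow> nat) \<Rightarrow> 'a set \<Rightarrow> ('f \<Rightarrow> 'a list \<Rightarrow> 'a) \<Rightarrow> ('c \<Rightarrow> 'a)
   \<Rightarrow> 'b set \<Rightarrow> ('f \<Rightarrow> 'b list \<Rightarrow> 'b) \<Rightarrow> ('c \<Rightarrow> 'b) \<Rightarrow> ('a \<Rightarrow> 'b) \<Rightarrow> bool" where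
  "alg_iso ar A opA cA B opB cB h \<longleftrightarrow> bij_betw h A B \<and>
     (\<forall>F xs. length xs = ar F \<and> set xs \<subseteq> A \<longrightarrow> h (opA F xs) = opB F (map h xs)) \<and>
     (\<forall>c. h (cA c) = cB c)"

definition isomorphic ::
  "('f \<Rightarrow> nat) \<Rightarrow> 'a set \<Rightarrow> ('f \<Rightarrow> 'a list \<Rightarrow> 'a) \<Rightarrow> ('c \<Rightarrow> 'a)
   \<Rightarrow> 'b set \<Rightarrow> ('f \<Rightarrow> 'b list \<Rightarrow> 'b) \<Rightarrow> ('c \<Rightarrow> 'b) \<Rightarrow> bool" where
  "isomorphic ar A opA cA B opB cB \<longleftrightarrow> (\<exists>h. alg_iso ar A opA cA B opB cB h)"

text \<open>Atomic formulas in variables 'v: x = y, x = c, F(x1,...,xn) = x0.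
  A literal is an atomic formula (True) or its negation (False).
  A formula (conjunction) is represented by its set of conjuncts.\<close>

datatype ('f, 'c, 'v) atom = AEqV 'v 'v | AEqC 'v 'c | AOp 'f "'v list" 'v

type_synonym ('f, 'c, 'v) lit = "bool \<times> ('f, 'c, 'v) atom"

fun sat_atom :: "('f \<Rightarrow> 'a list \<Rightarrow> 'a) \<Rightarrow> ('c \<Rightarrow> 'a) \<Rightarrow> ('v \<Rightarrow> 'a) \<Rightarrow> ('f, 'c, 'v) atom \<Rightarrow> bool" where
  "sat_atom opA cA \<sigma> (AEqV x y) = (\<sigma> x = \<sigma> y)"
| "sat_atom opA cA \<sigma> (AEqC x c) = (\<sigma> x = cA c)"
| "sat_atom opA cA \<sigma> (AOp F xs x0) = (opA F (map \<sigma> xs) = \<sigma> x0)"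

definition sat_lit :: "('f \<Rightarrow> 'a list \<Rightarrow> 'a) \<Rightarrow> ('c \<Rightarrow> 'a) \<Rightarrow> ('v \<Rightarrow> 'a) \<Rightarrow> ('f, 'c, 'v) lit \<Rightarrow> bool" where
  "sat_lit opA cA \<sigma> l \<longleftrightarrow> (fst l \<longleftrightarrow> sat_atom opA cA \<sigma> (snd l))"

definition diagram_lits :: "('f \<Rightarrow> nat) \<Rightarrow> 'f set \<Rightarrow> 'c set \<Rightarrow> 'v set \<Rightarrow> ('f, 'c, 'v) lit set" where
  "diagram_lits ar Fs Cs X =
     {(False, AEqV x y) | x y. x \<in> X \<and> y \<in> X \<and> x \<noteq> y}
   \<union> {(b, AEqC x c) | b x c. x \<in> X \<and> c \<in> Cs}
   \<union> {(b, AOp F xs x0) | b F xs x0. F \<in> Fs \<and> length xs = ar F \<and> set xs \<subseteq> X \<and> x0 \<in> X}"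

record ('i, 'v, 'f, 'c) dsys =
  idx  :: "'i set"
  leq  :: "'i \<Rightarrow> 'i \<Rightarrow> bool"
  lang :: "'i \<Rightarrow> 'f set \<times> 'c set"
  vars :: "'i \<Rightarrow> 'v set"
  form :: "'i \<Rightarrow> ('f, 'c, 'v) lit set"
  gam  :: "'i \<Rightarrow> 'i \<Rightarrow> 'v \<Rightarrow> 'v"

definition lim_elems :: "('i, 'v, 'f, 'c) dsys \<Rightarrow> ('v \<times> 'i) set" where
  "lim_elems \<Lambda> = {(x, i). i \<in> idx \<Lambda> \<and> x \<in> vars \<Lambda> i}"

definition lim_rel :: "('i, 'v, 'f, 'c) dsys \<Rightarrow> (('v \<times> 'i) \<times> ('v \<times> 'i)) set" where
  "lim_rel \<Lambda> = {((x, i), (y, j)). (x, i) \<in> lim_elems \<Lambda> \<and> (y, j) \<in> lim_elems \<Lambda> \<and>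
      (\<exists>k \<in> idx \<Lambda>. leq \<Lambda> i k \<and> leq \<Lambda> j k \<and> gam \<Lambda> i k x = gam \<Lambda> j k y)}"

definition lim_carrier :: "('i, 'v, 'f, 'c) dsys \<Rightarrow> ('v \<times> 'i) set set" where
  "lim_carrier \<Lambda> = lim_elems \<Lambda> // lim_rel \<Lambda>"

definition lim_const :: "('i, 'v, 'f, 'c) dsys \<Rightarrow> 'c \<Rightarrow> ('v \<times> 'i) set" where
  "lim_const \<Lambda> c = (SOME C. \<exists>i \<in> idx \<Lambda>. \<exists>x \<in> vars \<Lambda> i.
      (True, AEqC x c) \<in> form \<Lambda> i \<and> C = lim_rel \<Lambda> `` {(x, i)})"

definition lim_op :: "('i, 'v, 'f, 'c) dsys \<Rightarrow> 'f \<Rightarrow> ('v \<times> 'i) set list \<Rightarrow> ('v \<times> 'i) set" where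
  "lim_op \<Lambda> F cls = (SOME C. \<exists>j \<in> idx \<Lambda>. \<exists>x0 \<in> vars \<Lambda> j. \<exists>ys.
      length ys = length cls \<and>
      (\<forall>m < length cls. \<exists>x i. (x, i) \<in> cls ! m \<and> leq \<Lambda> i j \<and> ys ! m = gam \<Lambda> i j x) \<and>
      (True, AOp F ys x0) \<in> form \<Lambda> j \<and> C = lim_rel \<Lambda> `` {(x0, j)})"

text \<open>The system \<Lambda>^B. Variables x_b are identified with the elements b \<in> B.
  Indices are ((Fs, Cs), X') with Fs, Cs finite reducts and X' \<subseteq> B finite.\<close>

definition sysB :: "('f \<Rightarrow> nat) \<Rightarrow> 'b set \<Rightarrow> ('f \<Rightarrow> 'b list \<Rightarrow> 'b) \<Rightarrow> ('c \<Rightarrow> 'b)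
    \<Rightarrow> (('f set \<times> 'c set) \<times> 'b set, 'b, 'f, 'c) dsys" where
  "sysB ar B opB cB =
    \<lparr> idx = {((Fs, Cs), X). finite Fs \<and> finite Cs \<and> finite X \<and> X \<subseteq> B},
      leq = (\<lambda>((Fs, Cs), X) ((Fs', Cs'), X'). Fs \<subseteq> Fs' \<and> Cs \<subseteq> Cs' \<and> X \<subseteq> X'),
      lang = fst,
      vars = snd,
      form = (\<lambda>((Fs, Cs), X). {l \<in> diagram_lits ar Fs Cs X. sat_lit opB cB id l}),
      gam = (\<lambda>i j x. x) \<rparr>"

end

theory Submission
  imports Defs
begin

text \<open>Since all maps of \<open>\<Lambda>\<^sup>B\<close> are inclusions and the index set is directed by union,
  the class of \<open>(x\<^sub>b, i)\<close> in the limit consists of all \<open>(x\<^sub>b, j)\<close>, so it depends on \<open>b\<close> alone.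
  Every diagram-formula of \<open>\<Lambda>\<^sup>B\<close> is read off from \<open>\<B>\<close>, so \<open>b \<mapsto> [x\<^sub>b]\<close> respects
  constants and operations and is an isomorphism \<open>\<B> \<cong> L(\<Lambda>\<^sup>B)\<close>; its inverse is
  the required one.\<close>

lemma alg_iso_inv_into:
  assumes "is_algebra ar A opA cA" and "alg_iso ar A opA cA B opB cB h"
  shows "alg_iso ar B opB cB A opA cA (inv_into A h)"
proof -
  have bij: "bij_betw h A B" and hom: "\<And>F xs. length xs = ar F \<Longrightarrow> set xs \<subseteq> A \<Longrightarrow>
      h (opA F xs) = opB F (map h xs)" and const: "\<And>c. h (cA c) = cB c"
    using assms(2) unfolding alg_iso_def by auto
  have closed: "\<And>F xs. length xs = ar F \<Longrightarrow> set xs \<subseteq> A \<Longrightarrow> opA F xs \<in> A"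
    and const_mem: "\<And>c. cA c \<in> A"
    using assms(1) unfolding is_algebra_def by auto
  have inv_h: "inv_into A h (h x) = x" if "x \<in> A" for x
    using bij that by (simp add: bij_betw_def)
  have op_inv: "inv_into A h (opB F ys) = opA F (map (inv_into A h) ys)"
    if "length ys = ar F" "set ys \<subseteq> B" for F ys
  proof -
    let ?xs = "map (inv_into A h) ys"
    have xs: "set ?xs \<subseteq> A" "length ?xs = ar F"
      using that bij by (auto intro: inv_into_into simp: bij_betw_def)
    have "map h ?xs = ys"
      unfolding map_map using that bij
      by (intro map_idI) (auto simp: bij_betw_def f_inv_into_f)
    then have "opB F ys = h (opA F ?xs)"
      using hom[OF xs(2,1)] by simp
    then show ?thesis
      using inv_h closed[OF xs(2,1)] by simp
  qed
  show ?thesis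
    unfolding alg_iso_def
    using bij_betw_inv_into[OF bij] op_inv inv_h[OF const_mem] const by metis
qed

lemma sysB_simps:
  "idx (sysB ar B opB cB) = {((Fs, Cs), X). finite Fs \<and> finite Cs \<and> finite X \<and> X \<subseteq> B}"
  "leq (sysB ar B opB cB) i j \<longleftrightarrow>
     fst (fst i) \<subseteq> fst (fst j) \<and> snd (fst i) \<subseteq> snd (fst j) \<and> snd i \<subseteq> snd j"
  "vars (sysB ar B opB cB) = snd"
  "form (sysB ar B opB cB) i =
     {l \<in> diagram_lits ar (fst (fst i)) (snd (fst i)) (snd i). sat_lit opB cB id l}"
  "gam (sysB ar B opB cB) i j x = x"
  by (auto simp: sysB_def split: prod.splits)

definition point_class :: "'b set \<Rightarrow> 'b \<Rightarrow> ('b \<times> ('f set \<times> 'c set) \<times> 'b set) set" where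
  "point_class B b =
     {(b, ((Fs, Cs), X)) | Fs Cs X. finite Fs \<and> finite Cs \<and> finite X \<and> X \<subseteq> B \<and> b \<in> X}"

lemma mem_point_class [simp]:
  "(x, ((Fs, Cs), X)) \<in> point_class B b \<longleftrightarrow>
     x = b \<and> finite Fs \<and> finite Cs \<and> finite X \<and> X \<subseteq> B \<and> b \<in> X"
  by (auto simp: point_class_def)

lemma mem_point_class_iff:
  "(x, i) \<in> point_class B b \<longleftrightarrow> x = b \<and> i \<in> idx (sysB ar B opB cB) \<and> b \<in> snd i"
  by (cases i) (auto simp: sysB_simps)

lemma lim_elems_sysB_iff:
  "(x, i) \<in> lim_elems (sysB ar B opB cB) \<longleftrightarrow> i \<in> idx (sysB ar B opB cB) \<and> x \<in> snd i"
  by (simp add: lim_elems_def sysB_simps)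

lemma lim_rel_sysB_class:
  fixes B :: "'b set" and cB :: "'c \<Rightarrow> 'b" and ar :: "'f \<Rightarrow> nat"
  assumes "(x, i) \<in> lim_elems (sysB ar B opB cB)"
  shows "lim_rel (sysB ar B opB cB) `` {(x, i)} = point_class B x"
proof (intro set_eqI iffI)
  fix p assume "p \<in> lim_rel (sysB ar B opB cB) `` {(x, i)}"
  then show "p \<in> point_class B x"
    by (cases p) (auto simp: lim_rel_def lim_elems_sysB_iff mem_point_class_iff sysB_simps)
next
  fix p :: "'b \<times> ('f set \<times> 'c set) \<times> 'b set"
  assume p: "p \<in> point_class B x"
  obtain Fs Cs X Fs' Cs' X' where i: "i = ((Fs, Cs), X)" and p_eq: "p = (x, ((Fs', Cs'), X'))"
    using p by (auto simp: point_class_def prod_eq_iff)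
  let ?k = "((Fs \<union> Fs', Cs \<union> Cs'), X \<union> X')"
  have "?k \<in> idx (sysB ar B opB cB)" "p \<in> lim_elems (sysB ar B opB cB)"
    using assms p by (auto simp: i p_eq lim_elems_sysB_iff sysB_simps)
  moreover have "leq (sysB ar B opB cB) i ?k" "leq (sysB ar B opB cB) ((Fs', Cs'), X') ?k"
    by (simp_all add: i sysB_simps)
  ultimately show "p \<in> lim_rel (sysB ar B opB cB) `` {(x, i)}"
    using assms unfolding lim_rel_def p_eq
    by (simp only: Image_singleton_iff mem_Collect_eq case_prod_conv sysB_simps(5)) blast
qed

lemma lim_carrier_sysB: "lim_carrier (sysB ar B opB cB) = point_class B ` B"
proof -
  have "lim_carrier (sysB ar B opB cB) = (\<lambda>p. point_class B (fst p)) ` lim_elems (sysB ar B opB cB)"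
    unfolding lim_carrier_def quotient_def UNION_singleton_eq_range
    by (intro image_cong refl) (metis lim_rel_sysB_class prod.collapse)
  also have "\<dots> = point_class B ` fst ` lim_elems (sysB ar B opB cB)"
    by (simp add: image_image)
  also have "fst ` lim_elems (sysB ar B opB cB) = B"
  proof (intro subset_antisym subsetI)
    fix b assume "b \<in> B"
    then have "(b, (({}, {}), {b})) \<in> lim_elems (sysB ar B opB cB)"
      by (simp add: lim_elems_sysB_iff sysB_simps)
    then show "b \<in> fst ` lim_elems (sysB ar B opB cB)"
      by (rule rev_image_eqI) simp
  qed (auto simp: lim_elems_def sysB_simps)
  finally show ?thesis .
qed

lemma inj_on_point_class:
  "inj_on (point_class B :: 'b \<Rightarrow> ('b \<times> ('f set \<times> 'c set) \<times> 'b set) set) B"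
proof (rule inj_onI)
  fix a b
  assume "a \<in> B"
    and eq: "point_class B a = (point_class B b :: ('b \<times> ('f set \<times> 'c set) \<times> 'b set) set)"
  have "(a, (({} :: 'f set, {} :: 'c set), {a})) \<in> point_class B a"
    using \<open>a \<in> B\<close> by simp
  then have "(a, (({} :: 'f set, {} :: 'c set), {a})) \<in> point_class B b"
    unfolding eq .
  then show "a = b"
    unfolding mem_point_class by blast
qed

lemma lim_const_sysB:
  assumes "cB c \<in> B"
  shows "lim_const (sysB ar B opB cB) c = point_class B (cB c)"
  unfolding lim_const_def
proof (rule some_equality)
  let ?i = "(({}, {c}), {cB c})"
  show "\<exists>i\<in>idx (sysB ar B opB cB). \<exists>x\<in>vars (sysB ar B opB cB) i.
      (True, AEqC x c) \<in> form (sysB ar B opB cB) i \<and>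
      point_class B (cB c) = lim_rel (sysB ar B opB cB) `` {(x, i)}"
    using assms
    by (intro bexI[of _ ?i] bexI[of _ "cB c"])
       (auto simp: sysB_simps diagram_lits_def sat_lit_def lim_rel_sysB_class lim_elems_sysB_iff)
next
  fix C assume "\<exists>i\<in>idx (sysB ar B opB cB). \<exists>x\<in>vars (sysB ar B opB cB) i.
      (True, AEqC x c) \<in> form (sysB ar B opB cB) i \<and> C = lim_rel (sysB ar B opB cB) `` {(x, i)}"
  then show "C = point_class B (cB c)"
    by (auto simp: sysB_simps diagram_lits_def sat_lit_def lim_rel_sysB_class lim_elems_sysB_iff)
qed

lemma lim_op_sysB:
  assumes "is_algebra ar B opB cB" and "length bs = ar F" and "set bs \<subseteq> B"
  shows "lim_op (sysB ar B opB cB) F (map (point_class B) bs) = point_class B (opB F bs)"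
  unfolding lim_op_def
proof (rule some_equality)
  let ?S = "sysB ar B opB cB"
  let ?j = "(({F}, {}), set bs \<union> {opB F bs})"
  have "opB F bs \<in> B"
    using assms unfolding is_algebra_def by auto
  then have j: "?j \<in> idx ?S"
    using assms(3) by (simp add: sysB_simps)
  have args: "\<exists>x i. (x, i) \<in> map (point_class B) bs ! m \<and> leq ?S i ?j \<and> bs ! m = gam ?S i ?j x"
    if "m < length (map (point_class B) bs)" for m
    using that assms(3)
    by (intro exI[of _ "bs ! m"] exI[of _ "(({}, {}), {bs ! m})"]) (auto simp: sysB_simps)
  show "\<exists>j\<in>idx ?S. \<exists>x0\<in>vars ?S j. \<exists>ys. length ys = length (map (point_class B) bs) \<and>
      (\<forall>m<length (map (point_class B) bs). \<exists>x i. (x, i) \<in> map (point_class B) bs ! m \<and>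
         leq ?S i j \<and> ys ! m = gam ?S i j x) \<and>
      (True, AOp F ys x0) \<in> form ?S j \<and> point_class B (opB F bs) = lim_rel ?S `` {(x0, j)}"
  proof (rule bexI[OF _ j], rule bexI[of _ "opB F bs"], intro exI[of _ bs] conjI)
    show "(True, AOp F bs (opB F bs)) \<in> form ?S ?j"
      using assms(2) by (auto simp: sysB_simps diagram_lits_def sat_lit_def)
    show "point_class B (opB F bs) = lim_rel ?S `` {(opB F bs, ?j)}"
      using j by (simp add: lim_rel_sysB_class lim_elems_sysB_iff)
  qed (use args in \<open>simp_all add: sysB_simps(3)\<close>)
next
  let ?S = "sysB ar B opB cB"
  fix C assume "\<exists>j\<in>idx ?S. \<exists>x0\<in>vars ?S j. \<exists>ys. length ys = length (map (point_class B) bs) \<and>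
      (\<forall>m<length (map (point_class B) bs). \<exists>x i. (x, i) \<in> map (point_class B) bs ! m \<and>
         leq ?S i j \<and> ys ! m = gam ?S i j x) \<and>
      (True, AOp F ys x0) \<in> form ?S j \<and> C = lim_rel ?S `` {(x0, j)}"
  then obtain j x0 ys where j: "j \<in> idx ?S" "x0 \<in> snd j" "length ys = length bs"
      and args: "\<forall>m<length bs. \<exists>x i. (x, i) \<in> map (point_class B) bs ! m \<and>
         leq ?S i j \<and> ys ! m = x"
      and lit: "(True, AOp F ys x0) \<in> form ?S j" and C: "C = lim_rel ?S `` {(x0, j)}"
    unfolding sysB_simps(3,5) length_map by (elim bexE exE conjE) (rule that)
  have "ys = bs"
    using j(3) args by (intro nth_equalityI) (auto simp: point_class_def)
  then have "x0 = opB F bs"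
    using lit by (simp add: sysB_simps diagram_lits_def sat_lit_def)
  then show "C = point_class B (opB F bs)"
    using j C by (simp add: lim_rel_sysB_class lim_elems_sysB_iff)
qed

lemma alg_iso_point_class:
  assumes "is_algebra ar B opB cB"
  shows "alg_iso ar B opB cB (lim_carrier (sysB ar B opB cB)) (lim_op (sysB ar B opB cB))
           (lim_const (sysB ar B opB cB)) (point_class B)"
  unfolding alg_iso_def
proof (intro conjI allI impI)
  show "bij_betw (point_class B) B (lim_carrier (sysB ar B opB cB))"
    by (simp add: bij_betw_def inj_on_point_class lim_carrier_sysB)
  show "point_class B (opB F xs) = lim_op (sysB ar B opB cB) F (map (point_class B) xs)"
    if "length xs = ar F \<and> set xs \<subseteq> B" for F xs
    using lim_op_sysB[OF assms] that by simp
  show "point_class B (cB c) = lim_const (sysB ar B opB cB) c" for c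
    using assms by (simp add: is_algebra_def lim_const_sysB)
qed

theorem mainTheorem12:
  fixes ar :: "'f \<Rightarrow> nat" and B :: "'b set"
    and opB :: "'f \<Rightarrow> 'b list \<Rightarrow> 'b" and cB :: "'c \<Rightarrow> 'b"
  assumes "is_algebra ar B opB cB"
  shows "isomorphic ar (lim_carrier (sysB ar B opB cB)) (lim_op (sysB ar B opB cB))
           (lim_const (sysB ar B opB cB)) B opB cB"
  using alg_iso_inv_into[OF assms alg_iso_point_class[OF assms]]
  unfolding isomorphic_def by blast

end
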